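(* Let $\mathcal{S}$ be a bounded set functor such that $\mathcal{S}(V)$ covers $V$ for every locally convex space $V$. Let $E,F,X$ be locally convex spaces over $\mathbb{K}$ such that the evaluation homomorphism $\eta_F\colon F\to (F'_{\mathcal{S}})'_{\mathcal{S}}$ is continuous. Let $n\in\mathbb{N}_0\cup\{\infty\}$, $U\subseteq X$ open, and $f\colon U\to L(E,F)_{\mathcal{S}}$ a $C^n_{\mathbb{K}}$-map. Then $g\colon U\to L(F'_{\mathcal{S}},E'_{\mathcal{S}})_{\mathcal{S}}$, $z\mapsto f(z)'$, is $C^n_{\mathbb{K}}$, where $f(z)'(\lambda)=\lambda\circ f(z)$.
   Context: A bounded set functor is a functor $\mathcal{S}$ from locally convex spaces to sets such that $\mathcal{S}(E)$ is a set of bounded subsets of $E$ and for continuous linear $A\colon E\to F$ and $M\in\mathcal{S}(E)$ one has $A(M)\in\mathcal{S}(F)$, with $\mathcal{S}(A)(M)=A(M)$. $L(E,F)_{\mathcal{S}}$ is the space of continuous linear maps $E\to F$ with the topology of uniform convergence on the sets in $\mathcal{S}(E)$; $E'_{\mathcal{S}}=L(E,\mathbb{K})_{\mathcal{S}}$; $\eta_F(x)(\lambda)=\lambda(x)$. $C^n_{\mathbb{K}}$ is in Keller's sense (continuity plus iterated continuous directional derivatives $df(x,y)=\lim_{t\to 0}(f(x+ty)-f(x))/t$). *)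

theory Defs
  imports "HOL-Analysis.Analysis" "HOL-Library.Function_Algebras"
begin

text \<open>A (Hausdorff) locally convex space over the scalar field 'k (a real normed
field, i.e. R or C) is represented by a carrier set inside an ambient additive
group, a scalar multiplication and a generating family of seminorms.\<close>

record ('a, 'k) lcs =
  carr :: "'a set"
  scl  :: "'k \<Rightarrow> 'a \<Rightarrow> 'a"
  sn   :: "('a \<Rightarrow> real) set"

definition seminorm_on :: "('a::ab_group_add, 'k::real_normed_field) lcs \<Rightarrow> ('a \<Rightarrow> real) \<Rightarrow> bool" where
  "seminorm_on V p \<longleftrightarrow>
     (\<forall>x\<in>carr V. 0 \<le> p x) \<and>
     (\<forall>x\<in>carr V. \<forall>y\<in>carr V. p (x + y) \<le> p x + p y) \<and>
     (\<forall>c. \<forall>x\<in>carr V. p (scl V c x) = norm c * p x)"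

definition lcs :: "('a::ab_group_add, 'k::real_normed_field) lcs \<Rightarrow> bool" where
  "lcs V \<longleftrightarrow>
     0 \<in> carr V \<and>
     (\<forall>x\<in>carr V. \<forall>y\<in>carr V. x + y \<in> carr V) \<and>
     (\<forall>c. \<forall>x\<in>carr V. scl V c x \<in> carr V) \<and>
     (\<forall>x\<in>carr V. scl V 1 x = x) \<and>
     (\<forall>a b. \<forall>x\<in>carr V. scl V (a + b) x = scl V a x + scl V b x) \<and>
     (\<forall>a. \<forall>x\<in>carr V. \<forall>y\<in>carr V. scl V a (x + y) = scl V a x + scl V a y) \<and>
     (\<forall>a b. \<forall>x\<in>carr V. scl V a (scl V b x) = scl V (a * b) x) \<and>
     sn V \<noteq> {} \<and> (\<forall>p\<in>sn V. seminorm_on V p) \<and>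
     (\<forall>x\<in>carr V. x \<noteq> 0 \<longrightarrow> (\<exists>p\<in>sn V. 0 < p x))"

definition lcs_top :: "('a::ab_group_add, 'k) lcs \<Rightarrow> 'a topology" where
  "lcs_top V = topology (\<lambda>U. U \<subseteq> carr V \<and>
     (\<forall>x\<in>U. \<exists>P r. finite P \<and> P \<subseteq> sn V \<and> 0 < r \<and>
        {y \<in> carr V. \<forall>p\<in>P. p (y - x) < r} \<subseteq> U))"

definition clin :: "('a::ab_group_add, 'k) lcs \<Rightarrow> ('b::ab_group_add, 'k) lcs \<Rightarrow> ('a \<Rightarrow> 'b) \<Rightarrow> bool" where
  "clin V W A \<longleftrightarrow>
     (\<forall>x\<in>carr V. A x \<in> carr W) \<and>
     (\<forall>x\<in>carr V. \<forall>y\<in>carr V. A (x + y) = A x + A y) \<and>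
     (\<forall>c. \<forall>x\<in>carr V. A (scl V c x) = scl W c (A x)) \<and>
     continuous_map (lcs_top V) (lcs_top W) A"

definition bnd :: "('a::ab_group_add, 'k) lcs \<Rightarrow> 'a set \<Rightarrow> bool" where
  "bnd V M \<longleftrightarrow> M \<subseteq> carr V \<and> (\<forall>p\<in>sn V. bdd_above (p ` M))"

text \<open>The space L(V,W)_S of continuous linear maps (extended by 0 off the carrier)
with the topology of uniform convergence on the sets in S(V) = SV.\<close>
definition Lsp :: "('a::ab_group_add, 'k) lcs \<Rightarrow> ('b::ab_group_add, 'k) lcs \<Rightarrow> 'a set set
                    \<Rightarrow> ('a \<Rightarrow> 'b, 'k) lcs" where
  "Lsp V W SV = \<lparr> carr = {A. clin V W A \<and> (\<forall>x. x \<notin> carr V \<longrightarrow> A x = 0)},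
                  scl = (\<lambda>c A x. if x \<in> carr V then scl W c (A x) else 0),
                  sn = {(\<lambda>A. Sup (insert 0 ((\<lambda>x. q (A x)) ` M))) | M q. M \<in> SV \<and> q \<in> sn W} \<rparr>"

definition Kfield :: "('k::real_normed_field, 'k) lcs" where
  "Kfield = \<lparr> carr = UNIV, scl = (*), sn = {norm} \<rparr>"

definition dual :: "('a::ab_group_add, 'k::real_normed_field) lcs \<Rightarrow> 'a set set \<Rightarrow> ('a \<Rightarrow> 'k, 'k) lcs" where
  "dual V SV = Lsp V Kfield SV"

definition evl :: "('f::ab_group_add, 'k::real_normed_field) lcs \<Rightarrow> 'f set set \<Rightarrow> 'f \<Rightarrow> ('f \<Rightarrow> 'k) \<Rightarrow> 'k" where
  "evl F SF y = (\<lambda>l. if l \<in> carr (dual F SF) then l y else 0)"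

definition transp :: "('f::ab_group_add, 'k::real_normed_field) lcs \<Rightarrow> 'f set set \<Rightarrow> ('e \<Rightarrow> 'f)
                       \<Rightarrow> ('f \<Rightarrow> 'k) \<Rightarrow> 'e \<Rightarrow> 'k" where
  "transp F SF T = (\<lambda>l. if l \<in> carr (dual F SF) then l \<circ> T else 0)"

definition bsf_covering :: "('a::ab_group_add, 'k) lcs \<Rightarrow> 'a set set \<Rightarrow> bool" where
  "bsf_covering V SV \<longleftrightarrow> (\<forall>M\<in>SV. bnd V M) \<and> \<Union>SV = carr V"

text \<open>Functoriality: continuous linear A : V \<rightarrow> W maps S(V) into S(W).\<close>
definition bsf_compat :: "('a::ab_group_add, 'k) lcs \<Rightarrow> 'a set set \<Rightarrow> ('b::ab_group_add, 'k) lcs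
                          \<Rightarrow> 'b set set \<Rightarrow> bool" where
  "bsf_compat V SV W SW \<longleftrightarrow> (\<forall>A M. clin V W A \<and> M \<in> SV \<longrightarrow> A ` M \<in> SW)"

definition has_dlim :: "('b::ab_group_add, 'k::real_normed_field) lcs \<Rightarrow> ('k \<Rightarrow> 'b) \<Rightarrow> 'b \<Rightarrow> bool" where
  "has_dlim Y q v \<longleftrightarrow> v \<in> carr Y \<and>
     (\<forall>W. openin (lcs_top Y) W \<and> v \<in> W \<longrightarrow> (\<forall>\<^sub>F t in at 0. q t \<in> W))"

definition dlim :: "('b::ab_group_add, 'k::real_normed_field) lcs \<Rightarrow> ('k \<Rightarrow> 'b) \<Rightarrow> 'b" where
  "dlim Y q = (THE v. has_dlim Y q v)"

definition dquot :: "('x::ab_group_add, 'k::real_normed_field) lcs \<Rightarrow> ('y::ab_group_add, 'k) lcs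
                     \<Rightarrow> ('x \<Rightarrow> 'y) \<Rightarrow> 'x \<Rightarrow> 'x \<Rightarrow> 'k \<Rightarrow> 'y" where
  "dquot X Y g x y t = scl Y (inverse t) (g (x + scl X t y) - g x)"

text \<open>Iterated directional derivatives d^(k) f(x, y_0, ..., y_(k-1)); the directions
are given by a function ys on {..<k}.\<close>
fun dd :: "('x::ab_group_add, 'k::real_normed_field) lcs \<Rightarrow> ('y::ab_group_add, 'k) lcs
           \<Rightarrow> ('x \<Rightarrow> 'y) \<Rightarrow> nat \<Rightarrow> 'x \<Rightarrow> (nat \<Rightarrow> 'x) \<Rightarrow> 'y" where
  "dd X Y f 0 x ys = f x"
| "dd X Y f (Suc k) x ys = dlim Y (dquot X Y (\<lambda>z. dd X Y f k z ys) x (ys k))"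

definition Ck :: "('x::ab_group_add, 'k::real_normed_field) lcs \<Rightarrow> ('y::ab_group_add, 'k) lcs
                  \<Rightarrow> 'x set \<Rightarrow> ('x \<Rightarrow> 'y) \<Rightarrow> nat \<Rightarrow> bool" where
  "Ck X Y U f k \<longleftrightarrow> (\<forall>j\<le>k.
     (\<forall>i<j. \<forall>x\<in>U. \<forall>ys\<in>PiE {..<j} (\<lambda>_. carr X).
          \<exists>v. has_dlim Y (dquot X Y (\<lambda>z. dd X Y f i z ys) x (ys i)) v) \<and>
     continuous_map (prod_topology (subtopology (lcs_top X) U)
                                   (product_topology (\<lambda>_. lcs_top X) {..<j}))
                    (lcs_top Y) (\<lambda>(x, ys). dd X Y f j x ys))"

definition Cn :: "('x::ab_group_add, 'k::real_normed_field) lcs \<Rightarrow> ('y::ab_group_add, 'k) lcs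
                  \<Rightarrow> 'x set \<Rightarrow> ('x \<Rightarrow> 'y) \<Rightarrow> enat \<Rightarrow> bool" where
  "Cn X Y U f n \<longleftrightarrow> (\<forall>k. enat k \<le> n \<longrightarrow> Ck X Y U f k)"

end

theory Submission
  imports Defs
begin

text \<open>Transposition \<open>A \<mapsto> A'\<close> is a continuous linear map from \<open>L(E,F)\<^sub>S\<close> to
\<open>L(F'\<^sub>S, E'\<^sub>S)\<^sub>S\<close>, and a continuous linear map \<open>T\<close> commutes with difference quotients and
their limits, so \<open>T \<circ> f\<close> is \<open>C\<^sup>n\<close> with \<open>d\<^sup>k(T \<circ> f) = T \<circ> d\<^sup>k f\<close>.

Each \<open>A'\<close> is continuous by functoriality of \<open>S\<close>: for \<open>N \<in> S(E)\<close>, the seminorm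
\<open>sup {|\<lambda>(A x)| | x \<in> N}\<close> of \<open>A' \<lambda>\<close> is the seminorm of \<open>\<lambda>\<close> given by \<open>A(N) \<in> S(F)\<close>.
Transposition is continuous because \<open>\<eta>\<^sub>F\<close> is: since \<open>\<lambda>(A x) = \<eta>\<^sub>F(A x)(\<lambda>)\<close>, the seminorm of
\<open>A'\<close> given by \<open>M \<in> S(F'\<^sub>S)\<close> and \<open>N\<close> is the supremum over \<open>x \<in> N\<close> of the seminorm of
\<open>\<eta>\<^sub>F(A x)\<close> given by \<open>M\<close>, which is small as soon as finitely many seminorms of \<open>F\<close> are
uniformly small on \<open>A(N)\<close>, that is, as soon as \<open>A\<close> is small in \<open>L(E,F)\<^sub>S\<close>.\<close>

section \<open>The seminorm topology\<close>

definition lcs_ball :: "('a::ab_group_add, 'k) lcs \<Rightarrow> ('a \<Rightarrow> real) set \<Rightarrow> real \<Rightarrow> 'a \<Rightarrow> 'a set" where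
  "lcs_ball V P r x = {y \<in> carr V. \<forall>p\<in>P. p (y - x) < r}"

definition lcs_nhd :: "('a::ab_group_add, 'k) lcs \<Rightarrow> 'a \<Rightarrow> 'a set \<Rightarrow> bool" where
  "lcs_nhd V x U \<longleftrightarrow> (\<exists>P r. finite P \<and> P \<subseteq> sn V \<and> 0 < r \<and> lcs_ball V P r x \<subseteq> U)"

lemma istopology_lcs_open: "istopology (\<lambda>U. U \<subseteq> carr V \<and> (\<forall>x\<in>U. lcs_nhd V x U))"
  unfolding istopology_def
proof (rule conjI; intro allI impI)
  fix S T
  assume S: "S \<subseteq> carr V \<and> (\<forall>x\<in>S. lcs_nhd V x S)" and T: "T \<subseteq> carr V \<and> (\<forall>x\<in>T. lcs_nhd V x T)"
  show "S \<inter> T \<subseteq> carr V \<and> (\<forall>x\<in>S \<inter> T. lcs_nhd V x (S \<inter> T))"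
  proof (intro conjI ballI)
    show "S \<inter> T \<subseteq> carr V" using S by blast
    fix x assume "x \<in> S \<inter> T"
    then have "lcs_nhd V x S" "lcs_nhd V x T" using S T by auto
    then obtain P1 r1 P2 r2 where 1: "finite P1" "P1 \<subseteq> sn V" "0 < r1" "lcs_ball V P1 r1 x \<subseteq> S"
      and 2: "finite P2" "P2 \<subseteq> sn V" "0 < r2" "lcs_ball V P2 r2 x \<subseteq> T"
      unfolding lcs_nhd_def by blast
    have "lcs_ball V (P1 \<union> P2) (min r1 r2) x \<subseteq> S \<inter> T"
      using 1(4) 2(4) unfolding lcs_ball_def by auto
    then show "lcs_nhd V x (S \<inter> T)"
      unfolding lcs_nhd_def using 1(1-3) 2(1-3) by (intro exI[of _ "P1 \<union> P2"] exI[of _ "min r1 r2"]) simp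
  qed
next
  fix K assume K: "\<forall>S\<in>K. S \<subseteq> carr V \<and> (\<forall>x\<in>S. lcs_nhd V x S)"
  show "\<Union>K \<subseteq> carr V \<and> (\<forall>x\<in>\<Union>K. lcs_nhd V x (\<Union>K))"
  proof (intro conjI ballI)
    show "\<Union>K \<subseteq> carr V" using K by blast
    fix x assume "x \<in> \<Union>K"
    then obtain S where "S \<in> K" "x \<in> S" by blast
    then have "lcs_nhd V x S" using K by blast
    then show "lcs_nhd V x (\<Union>K)" unfolding lcs_nhd_def using \<open>S \<in> K\<close> by blast
  qed
qed

lemma openin_lcs_top: "openin (lcs_top V) U \<longleftrightarrow> U \<subseteq> carr V \<and> (\<forall>x\<in>U. lcs_nhd V x U)"
proof -
  have "lcs_top V = topology (\<lambda>U. U \<subseteq> carr V \<and> (\<forall>x\<in>U. lcs_nhd V x U))"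
    unfolding lcs_top_def lcs_nhd_def lcs_ball_def by simp
  then show ?thesis by (simp only: topology_inverse'[OF istopology_lcs_open])
qed

lemma openin_lcs_topD:
  "openin (lcs_top V) U \<Longrightarrow> x \<in> U \<Longrightarrow> \<exists>P r. finite P \<and> P \<subseteq> sn V \<and> 0 < r \<and> lcs_ball V P r x \<subseteq> U"
  by (simp add: openin_lcs_top lcs_nhd_def)

lemma topspace_lcs_top [simp]: "topspace (lcs_top V) = carr V"
proof -
  have "openin (lcs_top V) (carr V)"
    unfolding openin_lcs_top lcs_nhd_def
  proof (intro conjI ballI)
    fix x
    show "\<exists>P r. finite P \<and> P \<subseteq> sn V \<and> 0 < r \<and> lcs_ball V P r x \<subseteq> carr V"
      by (intro exI[of _ "{}"] exI[of _ "1::real"]) (auto simp: lcs_ball_def)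
  qed simp
  moreover have "topspace (lcs_top V) \<subseteq> carr V"
    using openin_lcs_top[of V "topspace (lcs_top V)"] by simp
  ultimately show ?thesis using openin_subset[of "lcs_top V" "carr V"] by blast
qed

context
  fixes V :: "('a::ab_group_add, 'k::real_normed_field) lcs"
  assumes V: "lcs V"
begin

lemma lcs_zero_in: "0 \<in> carr V"
  using V unfolding lcs_def by (elim conjE) blast
lemma lcs_add_in: "x \<in> carr V \<Longrightarrow> y \<in> carr V \<Longrightarrow> x + y \<in> carr V"
  using V unfolding lcs_def by (elim conjE) blast
lemma lcs_scl_in: "x \<in> carr V \<Longrightarrow> scl V c x \<in> carr V"
  using V unfolding lcs_def by (elim conjE) blast
lemma lcs_scl_one: "x \<in> carr V \<Longrightarrow> scl V 1 x = x"
  using V unfolding lcs_def by (elim conjE) blast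
lemma lcs_scl_add_left: "x \<in> carr V \<Longrightarrow> scl V (a + b) x = scl V a x + scl V b x"
  using V unfolding lcs_def by (elim conjE) blast
lemma lcs_scl_add_right: "x \<in> carr V \<Longrightarrow> y \<in> carr V \<Longrightarrow> scl V a (x + y) = scl V a x + scl V a y"
  using V unfolding lcs_def by (elim conjE) blast
lemma lcs_scl_scl: "x \<in> carr V \<Longrightarrow> scl V a (scl V b x) = scl V (a * b) x"
  using V unfolding lcs_def by (elim conjE) blast
lemma lcs_sn_nonempty: "sn V \<noteq> {}"
  using V unfolding lcs_def by (elim conjE) blast
lemma lcs_separating: "x \<in> carr V \<Longrightarrow> x \<noteq> 0 \<Longrightarrow> \<exists>p\<in>sn V. 0 < p x"
  using V unfolding lcs_def by (elim conjE) blast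

lemma lcs_seminorm_on: "p \<in> sn V \<Longrightarrow> seminorm_on V p"
  using V unfolding lcs_def by (elim conjE) blast
lemma seminorm_nonneg: "p \<in> sn V \<Longrightarrow> x \<in> carr V \<Longrightarrow> 0 \<le> p x"
  using lcs_seminorm_on unfolding seminorm_on_def by blast
lemma seminorm_triangle: "p \<in> sn V \<Longrightarrow> x \<in> carr V \<Longrightarrow> y \<in> carr V \<Longrightarrow> p (x + y) \<le> p x + p y"
  using lcs_seminorm_on unfolding seminorm_on_def by blast
lemma seminorm_scl: "p \<in> sn V \<Longrightarrow> x \<in> carr V \<Longrightarrow> p (scl V c x) = norm c * p x"
  using lcs_seminorm_on unfolding seminorm_on_def by blast

lemma lcs_scl_zero_left: "x \<in> carr V \<Longrightarrow> scl V 0 x = 0"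
  using lcs_scl_add_left[of x 0 0] by simp
lemma lcs_scl_zero_right: "scl V c 0 = 0"
  using lcs_scl_add_right[OF lcs_zero_in lcs_zero_in, of c] by simp
lemma lcs_scl_minus_one: "x \<in> carr V \<Longrightarrow> scl V (-1) x = - x"
  using lcs_scl_add_left[of x 1 "-1"] lcs_scl_one[of x] lcs_scl_zero_left[of x]
  by (simp add: eq_neg_iff_add_eq_0 add.commute)
lemma lcs_diff_in: "x \<in> carr V \<Longrightarrow> y \<in> carr V \<Longrightarrow> x - y \<in> carr V"
  using lcs_add_in lcs_scl_in lcs_scl_minus_one by (metis diff_conv_add_uminus)

lemma seminorm_zero: "p \<in> sn V \<Longrightarrow> p 0 = 0"
  using seminorm_scl[OF _ lcs_zero_in, of p 0] lcs_scl_zero_right by simp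
lemma seminorm_minus_commute: "p \<in> sn V \<Longrightarrow> x \<in> carr V \<Longrightarrow> y \<in> carr V \<Longrightarrow> p (x - y) = p (y - x)"
proof -
  assume "p \<in> sn V" "x \<in> carr V" "y \<in> carr V"
  then have "p (scl V (-1) (y - x)) = p (y - x)"
    using seminorm_scl[of p "y - x" "-1"] lcs_diff_in[of y x] by simp
  then show "p (x - y) = p (y - x)"
    using lcs_scl_minus_one lcs_diff_in \<open>x \<in> carr V\<close> \<open>y \<in> carr V\<close> by simp
qed
lemma seminorm_diff_triangle:
  "p \<in> sn V \<Longrightarrow> a \<in> carr V \<Longrightarrow> b \<in> carr V \<Longrightarrow> c \<in> carr V \<Longrightarrow> p (a - c) \<le> p (a - b) + p (b - c)"
  using seminorm_triangle[of p "a - b" "b - c"] lcs_diff_in by simp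

lemma openin_lcs_ball:
  assumes P: "finite P" "P \<subseteq> sn V" and x: "x \<in> carr V"
  shows "openin (lcs_top V) (lcs_ball V P r x)"
  unfolding openin_lcs_top
proof (intro conjI ballI)
  show "lcs_ball V P r x \<subseteq> carr V" unfolding lcs_ball_def by blast
  fix z assume "z \<in> lcs_ball V P r x"
  then have z: "z \<in> carr V" "\<And>p. p \<in> P \<Longrightarrow> p (z - x) < r" unfolding lcs_ball_def by auto
  define r' where "r' = Min (insert 1 ((\<lambda>p. r - p (z - x)) ` P))"
  have r'_pos: "0 < r'" unfolding r'_def using P z by (subst Min_gr_iff) auto
  have r'_le: "r' \<le> r - p (z - x)" if "p \<in> P" for p
    unfolding r'_def using P that by (intro Min_le) auto
  have "lcs_ball V P r' z \<subseteq> lcs_ball V P r x"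
  proof
    fix y assume "y \<in> lcs_ball V P r' z"
    then have y: "y \<in> carr V" "\<And>p. p \<in> P \<Longrightarrow> p (y - z) < r'" unfolding lcs_ball_def by auto
    have "p (y - x) < r" if p: "p \<in> P" for p
    proof -
      have "p (y - x) \<le> p (y - z) + p (z - x)"
        using seminorm_diff_triangle P p y z x by blast
      then show ?thesis using y(2)[OF p] r'_le[OF p] by linarith
    qed
    then show "y \<in> lcs_ball V P r x" unfolding lcs_ball_def using y by blast
  qed
  then show "lcs_nhd V z (lcs_ball V P r x)"
    unfolding lcs_nhd_def using P r'_pos by blast
qed

lemma centre_in_lcs_ball:
  assumes "P \<subseteq> sn V" "x \<in> carr V" "0 < r"
  shows "x \<in> lcs_ball V P r x"
proof -
  have "p (x - x) < r" if "p \<in> P" for p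
    using assms that seminorm_zero by (metis diff_self subsetD)
  then show ?thesis unfolding lcs_ball_def using assms(2) by blast
qed

lemma has_dlim_unique:
  assumes 1: "has_dlim V q v1" and 2: "has_dlim V q v2"
  shows "v1 = v2"
proof (rule ccontr)
  assume "v1 \<noteq> v2"
  have v: "v1 \<in> carr V" "v2 \<in> carr V" using 1 2 unfolding has_dlim_def by auto
  then obtain p where p: "p \<in> sn V" "0 < p (v1 - v2)"
    using lcs_separating lcs_diff_in \<open>v1 \<noteq> v2\<close> by (meson right_minus_eq)
  define d where "d = p (v1 - v2) / 2"
  have "0 < d" using p by (simp add: d_def)
  then have "openin (lcs_top V) (lcs_ball V {p} d v)" "v \<in> lcs_ball V {p} d v"
    if "v \<in> carr V" for v
    using that p openin_lcs_ball centre_in_lcs_ball by auto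
  then have "\<forall>\<^sub>F t in at 0. q t \<in> lcs_ball V {p} d v1" "\<forall>\<^sub>F t in at 0. q t \<in> lcs_ball V {p} d v2"
    using 1 2 v unfolding has_dlim_def by blast+
  then have "\<forall>\<^sub>F t in at (0::'k). False"
  proof (rule eventually_elim2)
    fix t assume "q t \<in> lcs_ball V {p} d v1" "q t \<in> lcs_ball V {p} d v2"
    then have "q t \<in> carr V" "p (q t - v1) < d" "p (q t - v2) < d" unfolding lcs_ball_def by auto
    moreover have "p (v1 - v2) \<le> p (v1 - q t) + p (q t - v2)"
      using seminorm_diff_triangle p v \<open>q t \<in> carr V\<close> by blast
    moreover have "p (v1 - q t) = p (q t - v1)"
      using seminorm_minus_commute p v \<open>q t \<in> carr V\<close> by blast
    ultimately show False unfolding d_def by linarith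
  qed
  then show False by simp
qed

lemma dlim_eqI: "has_dlim V q v \<Longrightarrow> dlim V q = v"
  unfolding dlim_def using has_dlim_unique by blast

end

section \<open>Continuous linear maps\<close>

definition lcs_linear :: "('a::ab_group_add, 'k) lcs \<Rightarrow> ('b::ab_group_add, 'k) lcs \<Rightarrow> ('a \<Rightarrow> 'b) \<Rightarrow> bool" where
  "lcs_linear V W A \<longleftrightarrow>
     (\<forall>x\<in>carr V. A x \<in> carr W) \<and>
     (\<forall>x\<in>carr V. \<forall>y\<in>carr V. A (x + y) = A x + A y) \<and>
     (\<forall>c. \<forall>x\<in>carr V. A (scl V c x) = scl W c (A x))"

definition seminorm_continuous :: "('a::ab_group_add, 'k) lcs \<Rightarrow> ('b::ab_group_add, 'k) lcs \<Rightarrow> ('a \<Rightarrow> 'b) \<Rightarrow> bool" where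
  "seminorm_continuous V W A \<longleftrightarrow> (\<forall>q\<in>sn W. \<forall>r>0. \<exists>P \<delta>. finite P \<and> P \<subseteq> sn V \<and> 0 < \<delta> \<and>
      (\<forall>y\<in>carr V. (\<forall>p\<in>P. p y < \<delta>) \<longrightarrow> q (A y) < r))"

lemma clin_iff: "clin V W A \<longleftrightarrow> lcs_linear V W A \<and> continuous_map (lcs_top V) (lcs_top W) A"
  unfolding clin_def lcs_linear_def by blast

lemma lcs_linear_in: "lcs_linear V W A \<Longrightarrow> x \<in> carr V \<Longrightarrow> A x \<in> carr W"
  unfolding lcs_linear_def by blast
lemma lcs_linear_add: "lcs_linear V W A \<Longrightarrow> x \<in> carr V \<Longrightarrow> y \<in> carr V \<Longrightarrow> A (x + y) = A x + A y"
  unfolding lcs_linear_def by blast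
lemma lcs_linear_scl: "lcs_linear V W A \<Longrightarrow> x \<in> carr V \<Longrightarrow> A (scl V c x) = scl W c (A x)"
  unfolding lcs_linear_def by blast

lemma lcs_linear_zero: "lcs V \<Longrightarrow> lcs_linear V W A \<Longrightarrow> A 0 = 0"
  using lcs_linear_add[of V W A 0 0] lcs_zero_in[of V] by simp

lemma lcs_linear_diff:
  "lcs V \<Longrightarrow> lcs_linear V W A \<Longrightarrow> x \<in> carr V \<Longrightarrow> y \<in> carr V \<Longrightarrow> A (x - y) = A x - A y"
  using lcs_linear_add[of V W A "x - y" y] lcs_diff_in[of V x y] by (simp add: eq_diff_eq)

lemma seminorm_continuousD:
  "seminorm_continuous V W A \<Longrightarrow> q \<in> sn W \<Longrightarrow> 0 < r \<Longrightarrow>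
     \<exists>P \<delta>. finite P \<and> P \<subseteq> sn V \<and> 0 < \<delta> \<and> (\<forall>y\<in>carr V. (\<forall>p\<in>P. p y < \<delta>) \<longrightarrow> q (A y) < r)"
  unfolding seminorm_continuous_def by simp

lemma continuous_map_imp_seminorm_continuous:
  assumes V: "lcs V" and W: "lcs W" and L: "lcs_linear V W A"
    and C: "continuous_map (lcs_top V) (lcs_top W) A"
  shows "seminorm_continuous V W A"
  unfolding seminorm_continuous_def
proof (intro ballI allI impI)
  fix q r assume q: "q \<in> sn W" and r: "(0::real) < r"
  let ?B = "lcs_ball W {q} r 0"
  have "openin (lcs_top W) ?B"
    using openin_lcs_ball[OF W, of "{q}" 0 r] q lcs_zero_in[OF W] by auto
  then have "openin (lcs_top V) {x \<in> carr V. A x \<in> ?B}"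
    using openin_continuous_map_preimage[OF C] by (metis topspace_lcs_top)
  moreover have "A 0 \<in> ?B"
    using centre_in_lcs_ball[OF W, of "{q}" 0 r] q r lcs_zero_in[OF W] lcs_linear_zero[OF V L] by simp
  then have "0 \<in> {x \<in> carr V. A x \<in> ?B}" using lcs_zero_in[OF V] by simp
  ultimately obtain P \<delta> where P: "finite P" "P \<subseteq> sn V" "0 < \<delta>"
    and sub: "lcs_ball V P \<delta> 0 \<subseteq> {x \<in> carr V. A x \<in> ?B}"
    using openin_lcs_topD by meson
  have "q (A y) < r" if y: "y \<in> carr V" "\<forall>p\<in>P. p y < \<delta>" for y
  proof -
    have "y \<in> lcs_ball V P \<delta> 0" unfolding lcs_ball_def using y by simp
    then have "A y \<in> ?B" using sub by blast
    then show ?thesis unfolding lcs_ball_def by simp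
  qed
  then show "\<exists>P \<delta>. finite P \<and> P \<subseteq> sn V \<and> 0 < \<delta> \<and> (\<forall>y\<in>carr V. (\<forall>p\<in>P. p y < \<delta>) \<longrightarrow> q (A y) < r)"
    using P by blast
qed

lemma seminorm_continuous_finite:
  assumes A: "seminorm_continuous V W A" and "finite Q" "Q \<subseteq> sn W" and r: "0 < r"
  shows "\<exists>P \<delta>. finite P \<and> P \<subseteq> sn V \<and> 0 < \<delta> \<and>
           (\<forall>y\<in>carr V. (\<forall>p\<in>P. p y < \<delta>) \<longrightarrow> (\<forall>q\<in>Q. q (A y) < r))"
  using assms(2,3)
proof (induction Q rule: finite_induct)
  case empty
  show ?case by (rule exI[of _ "{}"], rule exI[of _ 1]) auto
next
  case (insert q Q)
  then obtain P1 \<delta>1 where 1: "finite P1" "P1 \<subseteq> sn V" "0 < \<delta>1"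
      "\<forall>y\<in>carr V. (\<forall>p\<in>P1. p y < \<delta>1) \<longrightarrow> (\<forall>q\<in>Q. q (A y) < r)"
    by auto
  obtain P2 \<delta>2 where 2: "finite P2" "P2 \<subseteq> sn V" "0 < \<delta>2"
      "\<forall>y\<in>carr V. (\<forall>p\<in>P2. p y < \<delta>2) \<longrightarrow> q (A y) < r"
    using seminorm_continuousD[OF A _ r, of q] insert.prems by auto
  have "\<forall>q'\<in>insert q Q. q' (A y) < r" if "y \<in> carr V" "\<forall>p\<in>P1 \<union> P2. p y < min \<delta>1 \<delta>2" for y
    using that 1(4) 2(4) by auto
  then show ?case
    using 1(1-3) 2(1-3) by (intro exI[of _ "P1 \<union> P2"] exI[of _ "min \<delta>1 \<delta>2"]) auto
qed

lemma seminorm_continuous_imp_continuous_map: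
  assumes V: "lcs V" and W: "lcs W" and L: "lcs_linear V W A" and A: "seminorm_continuous V W A"
  shows "continuous_map (lcs_top V) (lcs_top W) A"
  unfolding continuous_map_def
proof (intro conjI allI impI)
  show "A \<in> topspace (lcs_top V) \<rightarrow> topspace (lcs_top W)" using L unfolding lcs_linear_def by auto
  fix U assume U: "openin (lcs_top W) U"
  show "openin (lcs_top V) {x \<in> topspace (lcs_top V). A x \<in> U}"
    unfolding openin_lcs_top lcs_nhd_def
  proof (intro conjI ballI)
    fix x assume "x \<in> {x \<in> topspace (lcs_top V). A x \<in> U}"
    then have x: "x \<in> carr V" and Ax: "A x \<in> U" by auto
    obtain Q r where Q: "finite Q" "Q \<subseteq> sn W" "0 < r" "lcs_ball W Q r (A x) \<subseteq> U"
      using openin_lcs_topD[OF U Ax] by blast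
    obtain P \<delta> where P: "finite P" "P \<subseteq> sn V" "0 < \<delta>"
      and est: "\<forall>y\<in>carr V. (\<forall>p\<in>P. p y < \<delta>) \<longrightarrow> (\<forall>q\<in>Q. q (A y) < r)"
      using seminorm_continuous_finite[OF A Q(1-3)] by blast
    have "lcs_ball V P \<delta> x \<subseteq> {x \<in> topspace (lcs_top V). A x \<in> U}"
    proof
      fix y assume "y \<in> lcs_ball V P \<delta> x"
      then have y: "y \<in> carr V" "\<forall>p\<in>P. p (y - x) < \<delta>" unfolding lcs_ball_def by auto
      have "y - x \<in> carr V" using lcs_diff_in[OF V y(1) x] .
      then have "\<forall>q\<in>Q. q (A (y - x)) < r" using est y(2) by blast
      then have "A y \<in> lcs_ball W Q r (A x)"
        unfolding lcs_ball_def using lcs_linear_diff[OF V L y(1) x] lcs_linear_in[OF L y(1)] by simp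
      then show "y \<in> {x \<in> topspace (lcs_top V). A x \<in> U}" using Q(4) y(1) by auto
    qed
    then show "\<exists>P r. finite P \<and> P \<subseteq> sn V \<and> 0 < r \<and> lcs_ball V P r x \<subseteq> {x \<in> topspace (lcs_top V). A x \<in> U}"
      using P by blast
  qed auto
qed

lemma bnd_uniform_bound:
  assumes "finite P" "P \<subseteq> sn V" "bnd V M"
  shows "\<exists>B. 0 \<le> B \<and> (\<forall>p\<in>P. \<forall>y\<in>M. p y \<le> B)"
  using assms(1,2)
proof (induction P rule: finite_induct)
  case empty then show ?case by auto
next
  case (insert p P)
  then obtain B where B: "0 \<le> B" "\<forall>p\<in>P. \<forall>y\<in>M. p y \<le> B" by auto
  have "bdd_above (p ` M)" using assms(3) insert unfolding bnd_def by auto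
  then obtain B' where "\<forall>y\<in>M. p y \<le> B'" unfolding bdd_above_def by auto
  then show ?case using B by (intro exI[of _ "max B B'"]) (auto simp: le_max_iff_disj)
qed

definition sup_seminorm :: "'a set \<Rightarrow> ('b \<Rightarrow> real) \<Rightarrow> ('a \<Rightarrow> 'b) \<Rightarrow> real" where
  "sup_seminorm M q A = Sup (insert 0 ((\<lambda>x. q (A x)) ` M))"

text \<open>A constant rather than \<open>bdd_above ((\<lambda>x. q (A x)) ` M)\<close>, whose higher-order pattern
defeats instantiation by \<open>OF\<close>.\<close>

definition bdd_sup :: "'a set \<Rightarrow> ('b \<Rightarrow> real) \<Rightarrow> ('a \<Rightarrow> 'b) \<Rightarrow> bool" where
  "bdd_sup M q A \<longleftrightarrow> bdd_above ((\<lambda>x. q (A x)) ` M)"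

lemma sup_seminorm_upper: "bdd_sup M q A \<Longrightarrow> x \<in> M \<Longrightarrow> q (A x) \<le> sup_seminorm M q A"
  unfolding sup_seminorm_def bdd_sup_def by (rule cSup_upper) auto

lemma sup_seminorm_nonneg: "bdd_sup M q A \<Longrightarrow> 0 \<le> sup_seminorm M q A"
  unfolding sup_seminorm_def bdd_sup_def by (rule cSup_upper) auto

lemma sup_seminorm_least: "0 \<le> B \<Longrightarrow> (\<And>x. x \<in> M \<Longrightarrow> q (A x) \<le> B) \<Longrightarrow> sup_seminorm M q A \<le> B"
  unfolding sup_seminorm_def by (rule cSup_least) auto

lemma sup_seminorm_triangle:
  assumes A: "bdd_sup M q A" and B: "bdd_sup M q B"
    and C: "\<And>x. x \<in> M \<Longrightarrow> q (C x) \<le> q (A x) + q (B x)"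
  shows "sup_seminorm M q C \<le> sup_seminorm M q A + sup_seminorm M q B"
proof (rule sup_seminorm_least)
  show "0 \<le> sup_seminorm M q A + sup_seminorm M q B"
    using sup_seminorm_nonneg[OF A] sup_seminorm_nonneg[OF B] by simp
  fix x assume x: "x \<in> M"
  show "q (C x) \<le> sup_seminorm M q A + sup_seminorm M q B"
    using C[OF x] sup_seminorm_upper[OF A x] sup_seminorm_upper[OF B x] by simp
qed

lemma sup_seminorm_scale:
  assumes A: "bdd_sup M q A" and B: "bdd_sup M q B" and a: "0 \<le> a"
    and val: "\<And>x. x \<in> M \<Longrightarrow> q (B x) = a * q (A x)"
  shows "sup_seminorm M q B = a * sup_seminorm M q A"
proof (rule antisym)
  show "sup_seminorm M q B \<le> a * sup_seminorm M q A"
  proof (rule sup_seminorm_least)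
    show "0 \<le> a * sup_seminorm M q A" using a sup_seminorm_nonneg[OF A] by simp
    show "q (B x) \<le> a * sup_seminorm M q A" if "x \<in> M" for x
      using val[OF that] sup_seminorm_upper[OF A that] a by (simp add: mult_left_mono)
  qed
next
  show "a * sup_seminorm M q A \<le> sup_seminorm M q B"
  proof (cases "a = 0")
    case True
    then show ?thesis using sup_seminorm_nonneg[OF B] by simp
  next
    case False
    then have a: "0 < a" using a by simp
    have "sup_seminorm M q A \<le> sup_seminorm M q B / a"
    proof (rule sup_seminorm_least)
      show "0 \<le> sup_seminorm M q B / a" using sup_seminorm_nonneg[OF B] a by simp
      show "q (A x) \<le> sup_seminorm M q B / a" if "x \<in> M" for x
        using sup_seminorm_upper[OF B that] val[OF that] a by (simp add: field_simps)
    qed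
    then show ?thesis using a by (simp add: field_simps)
  qed
qed

text \<open>Rescale \<open>M\<close> into the \<open>\<delta>\<close>-ball on which \<open>q \<circ> A < 1\<close>.\<close>

lemma seminorm_continuous_bdd_sup:
  fixes V :: "('a::ab_group_add, 'k::real_normed_field) lcs" and W :: "('b::ab_group_add, 'k) lcs"
  assumes V: "lcs V" and W: "lcs W" and L: "lcs_linear V W A" and A: "seminorm_continuous V W A"
    and M: "bnd V M" and q: "q \<in> sn W"
  shows "bdd_sup M q A"
proof -
  obtain P \<delta> where P: "finite P" "P \<subseteq> sn V" "0 < \<delta>"
    and est: "\<forall>y\<in>carr V. (\<forall>p\<in>P. p y < \<delta>) \<longrightarrow> q (A y) < 1"
    using seminorm_continuousD[OF A q zero_less_one] by blast
  obtain B where B: "0 \<le> B" "\<forall>p\<in>P. \<forall>y\<in>M. p y \<le> B" using bnd_uniform_bound[OF P(1,2) M] by blast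
  define e where "e = \<delta> / (B + 1)"
  have e: "0 < e" using P B by (simp add: e_def)
  define c :: 'k where "c = of_real e"
  have nc: "norm c = e" using e by (simp add: c_def)
  have "q (A y) \<le> 1 / e" if y: "y \<in> M" for y
  proof -
    have yc: "y \<in> carr V" using M y unfolding bnd_def by auto
    have "p (scl V c y) < \<delta>" if p: "p \<in> P" for p
    proof -
      have "p (scl V c y) = e * p y" using seminorm_scl[OF V, of p y c] p P yc nc by auto
      also have "\<dots> \<le> e * B" using B p y e by (simp add: mult_left_mono)
      also have "\<dots> < \<delta>" using B P unfolding e_def by (simp add: field_simps)
      finally show ?thesis .
    qed
    then have "q (A (scl V c y)) < 1" using est lcs_scl_in[OF V yc] by blast
    then have "e * q (A y) < 1"
      using lcs_linear_scl[OF L yc] seminorm_scl[OF W q lcs_linear_in[OF L yc]] nc by simp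
    then show ?thesis using e by (simp add: field_simps)
  qed
  then show ?thesis unfolding bdd_sup_def bdd_above_def by blast
qed

section \<open>The spaces \<open>L(V,W)\<^sub>S\<close>\<close>

lemma clin_zero: "lcs W \<Longrightarrow> clin V W 0"
  unfolding clin_def zero_fun_def using lcs_zero_in[of W] lcs_scl_zero_right[of W] by simp

lemma clin_add:
  assumes V: "lcs V" and W: "lcs W" and A: "clin V W A" and B: "clin V W B"
  shows "clin V W (A + B)"
proof -
  have LA: "lcs_linear V W A" and LB: "lcs_linear V W B" using A B clin_iff by auto
  have CA: "seminorm_continuous V W A" and CB: "seminorm_continuous V W B"
    using continuous_map_imp_seminorm_continuous[OF V W] A B clin_iff by auto
  have L: "lcs_linear V W (A + B)" unfolding lcs_linear_def
  proof (intro conjI ballI allI)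
    fix x assume x: "x \<in> carr V"
    show "(A + B) x \<in> carr W" using lcs_add_in[OF W lcs_linear_in[OF LA x] lcs_linear_in[OF LB x]] by simp
    fix y assume y: "y \<in> carr V"
    show "(A + B) (x + y) = (A + B) x + (A + B) y"
      using lcs_linear_add[OF LA x y] lcs_linear_add[OF LB x y] by (simp add: ac_simps)
  next
    fix c x assume x: "x \<in> carr V"
    show "(A + B) (scl V c x) = scl W c ((A + B) x)"
      using lcs_linear_scl[OF LA x] lcs_linear_scl[OF LB x]
        lcs_scl_add_right[OF W lcs_linear_in[OF LA x] lcs_linear_in[OF LB x]] by simp
  qed
  have "seminorm_continuous V W (A + B)" unfolding seminorm_continuous_def
  proof (intro ballI allI impI)
    fix q r assume q: "q \<in> sn W" and r: "(0::real) < r"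
    then have r2: "0 < r / 2" by simp
    obtain P1 \<delta>1 where 1: "finite P1" "P1 \<subseteq> sn V" "0 < \<delta>1"
        "\<forall>y\<in>carr V. (\<forall>p\<in>P1. p y < \<delta>1) \<longrightarrow> q (A y) < r / 2"
      using seminorm_continuousD[OF CA q r2] by blast
    obtain P2 \<delta>2 where 2: "finite P2" "P2 \<subseteq> sn V" "0 < \<delta>2"
        "\<forall>y\<in>carr V. (\<forall>p\<in>P2. p y < \<delta>2) \<longrightarrow> q (B y) < r / 2"
      using seminorm_continuousD[OF CB q r2] by blast
    have "q ((A + B) y) < r" if y: "y \<in> carr V" "\<forall>p\<in>P1 \<union> P2. p y < min \<delta>1 \<delta>2" for y
    proof -
      have "\<forall>p\<in>P1. p y < \<delta>1" "\<forall>p\<in>P2. p y < \<delta>2" using y(2) by auto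
      then have "q (A y) < r / 2" "q (B y) < r / 2" using 1(4) 2(4) y(1) by blast+
      moreover have "q (A y + B y) \<le> q (A y) + q (B y)"
        using seminorm_triangle[OF W q lcs_linear_in[OF LA y(1)] lcs_linear_in[OF LB y(1)]] .
      ultimately show ?thesis by simp
    qed
    then show "\<exists>P \<delta>. finite P \<and> P \<subseteq> sn V \<and> 0 < \<delta> \<and>
        (\<forall>y\<in>carr V. (\<forall>p\<in>P. p y < \<delta>) \<longrightarrow> q ((A + B) y) < r)"
      using 1(1-3) 2(1-3) by (intro exI[of _ "P1 \<union> P2"] exI[of _ "min \<delta>1 \<delta>2"]) auto
  qed
  then show ?thesis using L seminorm_continuous_imp_continuous_map[OF V W L] clin_iff by blast
qed

lemma clin_scl:
  fixes V :: "('a::ab_group_add, 'k::real_normed_field) lcs" and W :: "('b::ab_group_add, 'k) lcs"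
  assumes V: "lcs V" and W: "lcs W" and A: "clin V W A"
  shows "clin V W (\<lambda>x. if x \<in> carr V then scl W c (A x) else 0)" (is "clin V W ?B")
proof -
  have LA: "lcs_linear V W A" using A clin_iff by auto
  have CA: "seminorm_continuous V W A"
    using continuous_map_imp_seminorm_continuous[OF V W] A clin_iff by auto
  have L: "lcs_linear V W ?B" unfolding lcs_linear_def
  proof (intro conjI ballI allI)
    fix x assume x: "x \<in> carr V"
    show "?B x \<in> carr W" using lcs_scl_in[OF W lcs_linear_in[OF LA x]] x by simp
    fix y assume y: "y \<in> carr V"
    show "?B (x + y) = ?B x + ?B y"
      using lcs_linear_add[OF LA x y] lcs_scl_add_right[OF W lcs_linear_in[OF LA x] lcs_linear_in[OF LA y]]
        x y lcs_add_in[OF V x y] by simp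
  next
    fix d x assume x: "x \<in> carr V"
    show "?B (scl V d x) = scl W d (?B x)"
      using lcs_linear_scl[OF LA x] lcs_scl_in[OF V x] x lcs_scl_scl[OF W lcs_linear_in[OF LA x]]
      by (simp add: mult.commute)
  qed
  have "seminorm_continuous V W ?B" unfolding seminorm_continuous_def
  proof (intro ballI allI impI)
    fix q r assume q: "q \<in> sn W" and r: "(0::real) < r"
    have c1: "0 < norm c + 1" by (simp add: add_nonneg_pos)
    then have r': "0 < r / (norm c + 1)" using r by simp
    obtain P \<delta> where P: "finite P" "P \<subseteq> sn V" "0 < \<delta>"
        "\<forall>y\<in>carr V. (\<forall>p\<in>P. p y < \<delta>) \<longrightarrow> q (A y) < r / (norm c + 1)"
      using seminorm_continuousD[OF CA q r'] by blast
    have "q (?B y) < r" if y: "y \<in> carr V" "\<forall>p\<in>P. p y < \<delta>" for y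
    proof -
      have "q (A y) < r / (norm c + 1)" using P(4) y by blast
      have "q (?B y) = norm c * q (A y)" using seminorm_scl[OF W q lcs_linear_in[OF LA y(1)]] y by simp
      also have "\<dots> \<le> norm c * (r / (norm c + 1))"
        by (rule mult_left_mono) (use \<open>q (A y) < r / (norm c + 1)\<close> in simp_all)
      also have "\<dots> < r" using r c1 by (simp add: field_simps)
      finally show ?thesis .
    qed
    then show "\<exists>P \<delta>. finite P \<and> P \<subseteq> sn V \<and> 0 < \<delta> \<and> (\<forall>y\<in>carr V. (\<forall>p\<in>P. p y < \<delta>) \<longrightarrow> q (?B y) < r)"
      using P(1-3) by blast
  qed
  then show ?thesis using L seminorm_continuous_imp_continuous_map[OF V W L] clin_iff by blast
qed

lemma carr_Lsp: "A \<in> carr (Lsp V W SV) \<longleftrightarrow> clin V W A \<and> (\<forall>x. x \<notin> carr V \<longrightarrow> A x = 0)"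
  unfolding Lsp_def by simp

lemma scl_Lsp: "scl (Lsp V W SV) c A = (\<lambda>x. if x \<in> carr V then scl W c (A x) else 0)"
  unfolding Lsp_def by simp

lemma sn_Lsp: "sn (Lsp V W SV) = {sup_seminorm M q | M q. M \<in> SV \<and> q \<in> sn W}"
  unfolding Lsp_def sup_seminorm_def[abs_def] by simp

lemma Lsp_apply_in: "lcs W \<Longrightarrow> A \<in> carr (Lsp V W SV) \<Longrightarrow> A x \<in> carr W"
  unfolding carr_Lsp clin_def using lcs_zero_in[of W] by (cases "x \<in> carr V") auto

lemma Lsp_bdd_sup:
  assumes V: "lcs V" and W: "lcs W" and cov: "bsf_covering V SV"
    and A: "A \<in> carr (Lsp V W SV)" and M: "M \<in> SV" and q: "q \<in> sn W"
  shows "bdd_sup M q A"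
proof -
  have L: "lcs_linear V W A" and C: "continuous_map (lcs_top V) (lcs_top W) A"
    using A unfolding carr_Lsp clin_iff by auto
  have "bnd V M" using cov M unfolding bsf_covering_def by blast
  then show ?thesis
    by (rule seminorm_continuous_bdd_sup[OF V W L continuous_map_imp_seminorm_continuous[OF V W L C] _ q])
qed

context
  fixes V :: "('a::ab_group_add, 'k::real_normed_field) lcs" and W :: "('b::ab_group_add, 'k) lcs"
    and SV :: "'a set set"
  assumes V: "lcs V" and W: "lcs W" and cov: "bsf_covering V SV"
begin

lemma seminorm_on_Lsp_sup_seminorm:
  assumes M: "M \<in> SV" and q: "q \<in> sn W"
  shows "seminorm_on (Lsp V W SV) (sup_seminorm M q)"
proof -
  let ?L = "Lsp V W SV"
  have bdd: "bdd_sup M q A" if "A \<in> carr ?L" for A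
    by (rule Lsp_bdd_sup[OF V W cov that M q])
  show ?thesis unfolding seminorm_on_def
  proof (intro conjI ballI allI)
    fix A assume "A \<in> carr ?L"
    then show "0 \<le> sup_seminorm M q A" by (rule sup_seminorm_nonneg[OF bdd])
  next
    fix A B assume A: "A \<in> carr ?L" and B: "B \<in> carr ?L"
    show "sup_seminorm M q (A + B) \<le> sup_seminorm M q A + sup_seminorm M q B"
      using sup_seminorm_triangle[OF bdd[OF A] bdd[OF B]]
        seminorm_triangle[OF W q Lsp_apply_in[OF W A] Lsp_apply_in[OF W B]] by simp
  next
    fix c A assume A: "A \<in> carr ?L"
    have "scl ?L c A \<in> carr ?L"
      using A clin_scl[OF V W] unfolding carr_Lsp scl_Lsp by simp
    moreover have "q (scl ?L c A x) = norm c * q (A x)" if "x \<in> M" for x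
      using that cov M seminorm_scl[OF W q Lsp_apply_in[OF W A]]
      unfolding scl_Lsp bsf_covering_def by auto
    ultimately show "sup_seminorm M q (scl ?L c A) = norm c * sup_seminorm M q A"
      using sup_seminorm_scale[OF bdd[OF A] bdd] by simp
  qed
qed

lemma Lsp_separating:
  assumes A: "A \<in> carr (Lsp V W SV)" "A \<noteq> 0"
  shows "\<exists>p\<in>sn (Lsp V W SV). 0 < p A"
proof -
  obtain x where x: "A x \<noteq> 0" using A(2) by (auto simp: fun_eq_iff)
  then have "x \<in> carr V" using A(1) unfolding carr_Lsp by blast
  then obtain M where M: "M \<in> SV" "x \<in> M" using cov unfolding bsf_covering_def by blast
  obtain q where q: "q \<in> sn W" "0 < q (A x)" using lcs_separating[OF W Lsp_apply_in[OF W A(1)] x] by blast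
  have "q (A x) \<le> sup_seminorm M q A"
    using sup_seminorm_upper[OF Lsp_bdd_sup[OF V W cov A(1) M(1) q(1)] M(2)] .
  moreover have "sup_seminorm M q \<in> sn (Lsp V W SV)" unfolding sn_Lsp using M q by blast
  ultimately show ?thesis using q(2) by (intro bexI[of _ "sup_seminorm M q"]) auto
qed

lemma lcs_Lsp: "lcs (Lsp V W SV)"
proof -
  let ?L = "Lsp V W SV"
  have "SV \<noteq> {}" using cov lcs_zero_in[OF V] unfolding bsf_covering_def by auto
  then have "sn ?L \<noteq> {}" unfolding sn_Lsp using lcs_sn_nonempty[OF W] by blast
  moreover have "seminorm_on ?L p" if "p \<in> sn ?L" for p
    using that seminorm_on_Lsp_sup_seminorm unfolding sn_Lsp by blast
  moreover have "0 \<in> carr ?L" unfolding carr_Lsp using clin_zero[OF W] by simp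
  moreover have "A + B \<in> carr ?L" if "A \<in> carr ?L" "B \<in> carr ?L" for A B
    using that clin_add[OF V W] unfolding carr_Lsp by simp
  moreover have "scl ?L c A \<in> carr ?L" if "A \<in> carr ?L" for A c
    using that clin_scl[OF V W] unfolding carr_Lsp scl_Lsp by simp
  moreover have "scl ?L 1 A = A" if "A \<in> carr ?L" for A
    using that lcs_scl_one[OF W Lsp_apply_in[OF W that]] unfolding scl_Lsp carr_Lsp by (auto simp: fun_eq_iff)
  moreover have "scl ?L (a + b) A = scl ?L a A + scl ?L b A" if "A \<in> carr ?L" for A a b
    using lcs_scl_add_left[OF W Lsp_apply_in[OF W that]] unfolding scl_Lsp by (auto simp: fun_eq_iff)
  moreover have "scl ?L a (A + B) = scl ?L a A + scl ?L a B" if "A \<in> carr ?L" "B \<in> carr ?L" for A B a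
    using lcs_scl_add_right[OF W Lsp_apply_in[OF W that(1)] Lsp_apply_in[OF W that(2)]]
    unfolding scl_Lsp by (auto simp: fun_eq_iff)
  moreover have "scl ?L a (scl ?L b A) = scl ?L (a * b) A" if "A \<in> carr ?L" for A a b
    using lcs_scl_scl[OF W Lsp_apply_in[OF W that]] unfolding scl_Lsp by (auto simp: fun_eq_iff)
  ultimately show ?thesis
    unfolding lcs_def using Lsp_separating by (intro conjI ballI allI impI) simp_all
qed

end

lemma Kfield_simps [simp]: "carr Kfield = UNIV" "scl Kfield c x = c * x" "sn Kfield = {norm}"
  unfolding Kfield_def by simp_all

lemma lcs_Kfield: "lcs (Kfield :: ('k::real_normed_field, 'k) lcs)"
  unfolding lcs_def seminorm_on_def
  by (simp add: norm_triangle_ineq norm_mult distrib_left distrib_right)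

lemma lcs_dual: "lcs V \<Longrightarrow> bsf_covering V SV \<Longrightarrow> lcs (dual V SV)"
  unfolding dual_def by (rule lcs_Lsp[OF _ lcs_Kfield])

lemma carr_dual: "l \<in> carr (dual V SV) \<longleftrightarrow> clin V Kfield l \<and> (\<forall>x. x \<notin> carr V \<longrightarrow> l x = 0)"
  unfolding dual_def carr_Lsp ..

lemma scl_dual: "scl (dual V SV) c l = (\<lambda>x. if x \<in> carr V then c * l x else 0)"
  unfolding dual_def scl_Lsp by (simp add: fun_eq_iff)

lemma sn_dual: "sn (dual V SV) = {sup_seminorm M norm | M. M \<in> SV}"
  unfolding dual_def sn_Lsp by simp

section \<open>Composition with continuous linear maps\<close>

lemma dd_cong: "(\<And>l. l < i \<Longrightarrow> ys l = ys' l) \<Longrightarrow> dd X Y f i x ys = dd X Y f i x ys'"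
proof (induction i arbitrary: x)
  case 0 then show ?case by simp
next
  case (Suc i)
  then have "(\<lambda>z. dd X Y f i z ys) = (\<lambda>z. dd X Y f i z ys')" and "ys i = ys' i" by auto
  then show ?case by simp
qed

lemma eventually_translate_in_open:
  fixes X :: "('x::ab_group_add, 'k::real_normed_field) lcs"
  assumes X: "lcs X" and U: "openin (lcs_top X) U" and x: "x \<in> U" and v: "v \<in> carr X"
  shows "\<forall>\<^sub>F t in at (0::'k). x + scl X t v \<in> U"
proof -
  have xc: "x \<in> carr X" using openin_subset[OF U] x by auto
  obtain P r where P: "finite P" "P \<subseteq> sn X" "0 < r" "lcs_ball X P r x \<subseteq> U"
    using openin_lcs_topD[OF U x] by blast
  define S where "S = (\<Sum>p\<in>P. p v)"
  have S0: "0 \<le> S" unfolding S_def using P(2) seminorm_nonneg[OF X _ v] by (intro sum_nonneg) auto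
  have pS: "p v \<le> S" if "p \<in> P" for p
    unfolding S_def using P that seminorm_nonneg[OF X _ v] by (intro member_le_sum) auto
  define d where "d = r / (S + 1)"
  have d: "0 < d" using P S0 by (simp add: d_def)
  have "x + scl X t v \<in> U" if t: "norm t < d" for t :: 'k
  proof -
    have "p (x + scl X t v - x) < r" if p: "p \<in> P" for p
    proof -
      have "p (x + scl X t v - x) = norm t * p v" using seminorm_scl[OF X _ v] p P by auto
      also have "\<dots> \<le> norm t * (S + 1)" using pS[OF p] by (simp add: mult_left_mono)
      also have "\<dots> < d * (S + 1)" using t S0 by (intro mult_strict_right_mono) auto
      also have "\<dots> = r" using S0 by (simp add: d_def)
      finally show ?thesis .
    qed
    then have "x + scl X t v \<in> lcs_ball X P r x"
      unfolding lcs_ball_def using lcs_add_in[OF X xc lcs_scl_in[OF X v]] by simp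
    then show ?thesis using P(4) by blast
  qed
  then show ?thesis unfolding eventually_at using d by (intro exI[of _ d]) auto
qed

lemma Ck_dd_in_carr:
  assumes f: "Ck X Y U f k" and i: "i \<le> k" and x: "x \<in> U" "x \<in> carr X"
    and ys: "\<And>l. l < i \<Longrightarrow> ys l \<in> carr X"
  shows "dd X Y f i x ys \<in> carr Y"
proof -
  have C: "continuous_map (prod_topology (subtopology (lcs_top X) U)
                                   (product_topology (\<lambda>_. lcs_top X) {..<i}))
                    (lcs_top Y) (\<lambda>(x, ys). dd X Y f i x ys)"
    using f i unfolding Ck_def by blast
  have "(x, restrict ys {..<i}) \<in> topspace (prod_topology (subtopology (lcs_top X) U)
                                   (product_topology (\<lambda>_. lcs_top X) {..<i}))"
    using x ys by (auto simp: topspace_subtopology)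
  then have "(\<lambda>(x, ys). dd X Y f i x ys) (x, restrict ys {..<i}) \<in> topspace (lcs_top Y)"
    by (rule continuous_map_image_subset_topspace[OF C, THEN subsetD, OF imageI])
  then have "dd X Y f i x (restrict ys {..<i}) \<in> carr Y" by simp
  moreover have "dd X Y f i x (restrict ys {..<i}) = dd X Y f i x ys" by (rule dd_cong) auto
  ultimately show ?thesis by simp
qed

lemma Ck_has_dlim:
  assumes Y: "lcs Y" and f: "Ck X Y U f k" and i: "i < k" and x: "x \<in> U"
    and ys: "\<And>l. l \<le> i \<Longrightarrow> ys l \<in> carr X"
  shows "has_dlim Y (dquot X Y (\<lambda>z. dd X Y f i z ys) x (ys i)) (dd X Y f (Suc i) x ys)"
proof -
  let ?ys = "restrict ys {..<Suc i}"
  have "?ys \<in> PiE {..<Suc i} (\<lambda>_. carr X)" using ys by auto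
  then obtain v where "has_dlim Y (dquot X Y (\<lambda>z. dd X Y f i z ?ys) x (?ys i)) v"
    using f i x unfolding Ck_def by (meson Suc_leI lessI)
  moreover have "(\<lambda>z. dd X Y f i z ?ys) = (\<lambda>z. dd X Y f i z ys)"
    by (rule ext, rule dd_cong) auto
  ultimately have v: "has_dlim Y (dquot X Y (\<lambda>z. dd X Y f i z ys) x (ys i)) v" by simp
  moreover have "dd X Y f (Suc i) x ys = v" using dlim_eqI[OF Y v] by simp
  ultimately show ?thesis by simp
qed

lemma has_dlim_dquot_linear:
  assumes Y: "lcs Y" and T: "lcs_linear Y Z T" and TC: "continuous_map (lcs_top Y) (lcs_top Z) T"
    and h: "has_dlim Y (dquot X Y h x y) v"
    and ev: "\<forall>\<^sub>F t in at 0. x + scl X t y \<in> U" and x: "x \<in> U"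
    and g: "\<And>z. z \<in> U \<Longrightarrow> h z \<in> carr Y \<and> g z = T (h z)"
  shows "has_dlim Z (dquot X Z g x y) (T v)"
  unfolding has_dlim_def
proof (intro conjI allI impI)
  have v: "v \<in> carr Y" using h unfolding has_dlim_def by blast
  then show "T v \<in> carr Z" by (rule lcs_linear_in[OF T])
  fix W assume W: "openin (lcs_top Z) W \<and> T v \<in> W"
  then have "openin (lcs_top Y) {y \<in> carr Y. T y \<in> W}"
    using openin_continuous_map_preimage[OF TC] by (metis topspace_lcs_top)
  moreover have "v \<in> {y \<in> carr Y. T y \<in> W}" using W v by simp
  ultimately have "\<forall>\<^sub>F t in at 0. dquot X Y h x y t \<in> {y \<in> carr Y. T y \<in> W}"
    using h unfolding has_dlim_def by blast
  with ev show "\<forall>\<^sub>F t in at 0. dquot X Z g x y t \<in> W"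
  proof (rule eventually_elim2)
    fix t assume xt: "x + scl X t y \<in> U" and "dquot X Y h x y t \<in> {y \<in> carr Y. T y \<in> W}"
    then have hW: "T (dquot X Y h x y t) \<in> W" by simp
    have "dquot X Z g x y t = scl Z (inverse t) (T (h (x + scl X t y)) - T (h x))"
      unfolding dquot_def using g[OF xt] g[OF x] by simp
    also have "\<dots> = scl Z (inverse t) (T (h (x + scl X t y) - h x))"
      using lcs_linear_diff[OF Y T] g[OF xt] g[OF x] by simp
    also have "\<dots> = T (dquot X Y h x y t)"
      unfolding dquot_def using lcs_linear_scl[OF T lcs_diff_in[OF Y]] g[OF xt] g[OF x] by simp
    finally show "dquot X Z g x y t \<in> W" using hW by simp
  qed
qed

context
  fixes X :: "('x::ab_group_add, 'k::real_normed_field) lcs" and Y :: "('y::ab_group_add, 'k) lcs"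
    and Z :: "('z::ab_group_add, 'k) lcs"
    and U :: "'x set" and T :: "'y \<Rightarrow> 'z" and f :: "'x \<Rightarrow> 'y" and k :: nat
  assumes X: "lcs X" and Y: "lcs Y" and Z: "lcs Z" and U: "openin (lcs_top X) U"
    and T: "lcs_linear Y Z T" and TC: "continuous_map (lcs_top Y) (lcs_top Z) T"
    and f: "Ck X Y U f k"
begin

lemma dd_compose_linear:
  assumes "i \<le> k" and "x \<in> U" and "\<And>l. l < i \<Longrightarrow> ys l \<in> carr X"
  shows "dd X Z (\<lambda>z. T (f z)) i x ys = T (dd X Y f i x ys)"
  using assms
proof (induction i arbitrary: x)
  case 0 then show ?case by simp
next
  case (Suc i)
  have "has_dlim Z (dquot X Z (\<lambda>z. dd X Z (\<lambda>z. T (f z)) i z ys) x (ys i)) (T (dd X Y f (Suc i) x ys))"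
  proof (rule has_dlim_dquot_linear[OF Y T TC])
    show "has_dlim Y (dquot X Y (\<lambda>z. dd X Y f i z ys) x (ys i)) (dd X Y f (Suc i) x ys)"
      by (rule Ck_has_dlim[OF Y f]) (use Suc.prems in auto)
    show "\<forall>\<^sub>F t in at 0. x + scl X t (ys i) \<in> U"
      using eventually_translate_in_open[OF X U] Suc.prems by simp
    show "dd X Y f i z ys \<in> carr Y \<and> dd X Z (\<lambda>z. T (f z)) i z ys = T (dd X Y f i z ys)"
      if "z \<in> U" for z
      using Ck_dd_in_carr[OF f] Suc.IH[OF _ that] Suc.prems that openin_subset[OF U] by auto
  qed (use Suc.prems in simp)
  then show ?case using dlim_eqI[OF Z] by simp
qed

lemma Ck_compose_linear: "Ck X Z U (\<lambda>z. T (f z)) k"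
  unfolding Ck_def
proof (intro allI impI conjI ballI)
  fix j i x ys assume j: "j \<le> k" and i: "i < j" and x: "x \<in> U"
    and "ys \<in> PiE {..<j} (\<lambda>_. carr X)"
  then have ys: "\<forall>l<j. ys l \<in> carr X" by auto
  show "\<exists>v. has_dlim Z (dquot X Z (\<lambda>z. dd X Z (\<lambda>z. T (f z)) i z ys) x (ys i)) v"
  proof (rule exI, rule has_dlim_dquot_linear[OF Y T TC])
    show "has_dlim Y (dquot X Y (\<lambda>z. dd X Y f i z ys) x (ys i)) (dd X Y f (Suc i) x ys)"
      by (rule Ck_has_dlim[OF Y f]) (use i j x ys in simp_all)
    show "\<forall>\<^sub>F t in at 0. x + scl X t (ys i) \<in> U"
      using eventually_translate_in_open[OF X U x] i ys by simp
    show "dd X Y f i z ys \<in> carr Y \<and> dd X Z (\<lambda>z. T (f z)) i z ys = T (dd X Y f i z ys)"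
      if "z \<in> U" for z
      using Ck_dd_in_carr[OF f] dd_compose_linear that i j ys openin_subset[OF U] by auto
  qed (rule x)
next
  fix j assume j: "j \<le> k"
  have C: "continuous_map (prod_topology (subtopology (lcs_top X) U)
                                   (product_topology (\<lambda>_. lcs_top X) {..<j}))
                    (lcs_top Y) (\<lambda>(x, ys). dd X Y f j x ys)"
    using f j unfolding Ck_def by blast
  show "continuous_map (prod_topology (subtopology (lcs_top X) U)
                                   (product_topology (\<lambda>_. lcs_top X) {..<j}))
                    (lcs_top Z) (\<lambda>(x, ys). dd X Z (\<lambda>z. T (f z)) j x ys)"
  proof (rule continuous_map_eq[OF continuous_map_compose[OF C TC]])
    fix p assume "p \<in> topspace (prod_topology (subtopology (lcs_top X) U)
                                   (product_topology (\<lambda>_. lcs_top X) {..<j}))"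
    then obtain x ys where "p = (x, ys)" "x \<in> U" "\<forall>l<j. ys l \<in> carr X"
      by (auto simp: topspace_subtopology)
    then show "(T \<circ> (\<lambda>(x, ys). dd X Y f j x ys)) p = (\<lambda>(x, ys). dd X Z (\<lambda>z. T (f z)) j x ys) p"
      using dd_compose_linear[OF j] by simp
  qed
qed

end

lemma Cn_compose_linear:
  assumes "lcs X" "lcs Y" "lcs Z" "openin (lcs_top X) U"
    and "lcs_linear Y Z T" "continuous_map (lcs_top Y) (lcs_top Z) T"
    and "Cn X Y U f n"
  shows "Cn X Z U (\<lambda>z. T (f z)) n"
  using assms Ck_compose_linear unfolding Cn_def by blast

section \<open>Transposition\<close>

lemma dual_lcs_linear: "l \<in> carr (dual V SV) \<Longrightarrow> lcs_linear V Kfield l"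
  unfolding carr_dual clin_iff by blast

lemma comp_in_dual:
  assumes F: "lcs F" and A: "A \<in> carr (Lsp E F SE)" and l: "l \<in> carr (dual F SF)"
  shows "l \<circ> A \<in> carr (dual E SE)"
  unfolding carr_dual clin_iff
proof (intro conjI allI impI)
  have LA: "lcs_linear E F A" using A unfolding carr_Lsp clin_iff by blast
  have Ll: "lcs_linear F Kfield l" using dual_lcs_linear[OF l] .
  show "lcs_linear E Kfield (l \<circ> A)" unfolding lcs_linear_def
  proof (intro conjI ballI allI)
    fix x y assume x: "x \<in> carr E" and y: "y \<in> carr E"
    show "(l \<circ> A) (x + y) = (l \<circ> A) x + (l \<circ> A) y"
      using lcs_linear_add[OF LA x y] lcs_linear_add[OF Ll Lsp_apply_in[OF F A] Lsp_apply_in[OF F A]] by simp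
  next
    fix c x assume x: "x \<in> carr E"
    show "(l \<circ> A) (scl E c x) = scl Kfield c ((l \<circ> A) x)"
      using lcs_linear_scl[OF LA x] lcs_linear_scl[OF Ll Lsp_apply_in[OF F A]] by simp
  qed simp
  show "continuous_map (lcs_top E) (lcs_top Kfield) (l \<circ> A)"
    using A l unfolding carr_Lsp carr_dual clin_def by (blast intro: continuous_map_compose)
  fix x assume "x \<notin> carr E"
  then have "A x = 0" using A unfolding carr_Lsp by blast
  then show "(l \<circ> A) x = 0" using lcs_linear_zero[OF F Ll] by simp
qed

context
  fixes E :: "('e::ab_group_add, 'k::real_normed_field) lcs" and F :: "('f::ab_group_add, 'k) lcs"
    and SE :: "'e set set" and SF :: "'f set set" and SF' :: "('f \<Rightarrow> 'k) set set"
  assumes E: "lcs E" and F: "lcs F"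
    and covE: "bsf_covering E SE" and covF: "bsf_covering F SF"
    and covF': "bsf_covering (dual F SF) SF'"
begin

lemma lcs_linear_transp_of:
  assumes A: "A \<in> carr (Lsp E F SE)"
  shows "lcs_linear (dual F SF) (dual E SE) (transp F SF A)"
  unfolding lcs_linear_def
proof (intro conjI ballI allI)
  fix l assume l: "l \<in> carr (dual F SF)"
  show "transp F SF A l \<in> carr (dual E SE)" using comp_in_dual[OF F A l] l unfolding transp_def by simp
  fix l' assume l': "l' \<in> carr (dual F SF)"
  have "l + l' \<in> carr (dual F SF)" using lcs_add_in[OF lcs_dual[OF F covF] l l'] .
  then show "transp F SF A (l + l') = transp F SF A l + transp F SF A l'"
    using l l' unfolding transp_def by (auto simp: fun_eq_iff)
next
  fix c l assume l: "l \<in> carr (dual F SF)"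
  have "scl (dual F SF) c l \<circ> A = scl (dual E SE) c (l \<circ> A)"
  proof (rule ext)
    fix x
    show "(scl (dual F SF) c l \<circ> A) x = scl (dual E SE) c (l \<circ> A) x"
    proof (cases "x \<in> carr E")
      case True then show ?thesis unfolding scl_dual using Lsp_apply_in[OF F A] by simp
    next
      case False
      then have "A x = 0" using A unfolding carr_Lsp by blast
      then show ?thesis
        unfolding scl_dual using False lcs_linear_zero[OF F dual_lcs_linear[OF l]] lcs_zero_in[OF F] by simp
    qed
  qed
  then show "transp F SF A (scl (dual F SF) c l) = scl (dual E SE) c (transp F SF A l)"
    using l lcs_scl_in[OF lcs_dual[OF F covF] l] unfolding transp_def by simp
qed

lemma seminorm_continuous_transp_of:
  assumes compEF: "bsf_compat E SE F SF" and A: "A \<in> carr (Lsp E F SE)"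
  shows "seminorm_continuous (dual F SF) (dual E SE) (transp F SF A)"
  unfolding seminorm_continuous_def
proof (intro ballI allI impI)
  fix q r assume q: "q \<in> sn (dual E SE)" and r: "(0::real) < r"
  then obtain N where N: "N \<in> SE" and qN: "q = sup_seminorm N norm" unfolding sn_dual by blast
  have "A ` N \<in> SF" using compEF N A unfolding bsf_compat_def carr_Lsp by blast
  then have p: "sup_seminorm (A ` N) norm \<in> sn (dual F SF)" unfolding sn_dual by blast
  have "q (transp F SF A l) = sup_seminorm (A ` N) norm l" if "l \<in> carr (dual F SF)" for l
    using that unfolding qN transp_def sup_seminorm_def by (simp add: image_image)
  then show "\<exists>P \<delta>. finite P \<and> P \<subseteq> sn (dual F SF) \<and> 0 < \<delta> \<and>
         (\<forall>l\<in>carr (dual F SF). (\<forall>p\<in>P. p l < \<delta>) \<longrightarrow> q (transp F SF A l) < r)"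
    using p r by (intro exI[of _ "{sup_seminorm (A ` N) norm}"] exI[of _ r]) auto
qed

lemma transp_in_Lsp:
  assumes compEF: "bsf_compat E SE F SF" and A: "A \<in> carr (Lsp E F SE)"
  shows "transp F SF A \<in> carr (Lsp (dual F SF) (dual E SE) SF')"
  unfolding carr_Lsp clin_iff
proof (intro conjI allI impI)
  show "lcs_linear (dual F SF) (dual E SE) (transp F SF A)" by (rule lcs_linear_transp_of[OF A])
  then show "continuous_map (lcs_top (dual F SF)) (lcs_top (dual E SE)) (transp F SF A)"
    using seminorm_continuous_imp_continuous_map[OF lcs_dual[OF F covF] lcs_dual[OF E covE]]
      seminorm_continuous_transp_of[OF compEF A] by blast
  show "transp F SF A l = 0" if "l \<notin> carr (dual F SF)" for l
    using that unfolding transp_def by simp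
qed

lemma lcs_linear_transp:
  assumes compEF: "bsf_compat E SE F SF"
  shows "lcs_linear (Lsp E F SE) (Lsp (dual F SF) (dual E SE) SF') (transp F SF)"
  unfolding lcs_linear_def
proof (intro conjI ballI allI)
  fix A assume A: "A \<in> carr (Lsp E F SE)"
  show "transp F SF A \<in> carr (Lsp (dual F SF) (dual E SE) SF')" by (rule transp_in_Lsp[OF compEF A])
  fix B assume B: "B \<in> carr (Lsp E F SE)"
  show "transp F SF (A + B) = transp F SF A + transp F SF B"
  proof (rule ext)
    fix l show "transp F SF (A + B) l = (transp F SF A + transp F SF B) l"
    proof (cases "l \<in> carr (dual F SF)")
      case True
      then show ?thesis
        using lcs_linear_add[OF dual_lcs_linear[OF True] Lsp_apply_in[OF F A] Lsp_apply_in[OF F B]]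
        unfolding transp_def by (auto simp: fun_eq_iff)
    qed (simp add: transp_def)
  qed
next
  fix c A assume A: "A \<in> carr (Lsp E F SE)"
  show "transp F SF (scl (Lsp E F SE) c A) = scl (Lsp (dual F SF) (dual E SE) SF') c (transp F SF A)"
  proof (rule ext)
    fix l
    show "transp F SF (scl (Lsp E F SE) c A) l = scl (Lsp (dual F SF) (dual E SE) SF') c (transp F SF A) l"
    proof (cases "l \<in> carr (dual F SF)")
      case True
      have Ll: "lcs_linear F Kfield l" using dual_lcs_linear[OF True] .
      have "l \<circ> scl (Lsp E F SE) c A = scl (dual E SE) c (l \<circ> A)"
        unfolding scl_Lsp scl_dual
        using lcs_linear_scl[OF Ll Lsp_apply_in[OF F A]] lcs_linear_zero[OF F Ll] by (auto simp: fun_eq_iff)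
      then show ?thesis using True unfolding transp_def scl_Lsp by simp
    qed (simp add: transp_def scl_Lsp)
  qed
qed

context
  assumes eta: "continuous_map (lcs_top F) (lcs_top (dual (dual F SF) SF')) (evl F SF)"
begin

lemma lcs_linear_evl: "lcs_linear F (dual (dual F SF) SF') (evl F SF)"
  unfolding lcs_linear_def
proof (intro conjI ballI allI)
  fix y assume y: "y \<in> carr F"
  show "evl F SF y \<in> carr (dual (dual F SF) SF')"
    using continuous_map_image_subset_topspace[OF eta] y by auto
  fix y' assume y': "y' \<in> carr F"
  show "evl F SF (y + y') = evl F SF y + evl F SF y'"
  proof (rule ext)
    fix l show "evl F SF (y + y') l = (evl F SF y + evl F SF y') l"
    proof (cases "l \<in> carr (dual F SF)")
      case True
      then show ?thesis unfolding evl_def using lcs_linear_add[OF dual_lcs_linear[OF True] y y'] by simp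
    qed (simp add: evl_def)
  qed
next
  fix c y assume y: "y \<in> carr F"
  show "evl F SF (scl F c y) = scl (dual (dual F SF) SF') c (evl F SF y)"
  proof (rule ext)
    fix l show "evl F SF (scl F c y) l = scl (dual (dual F SF) SF') c (evl F SF y) l"
    proof (cases "l \<in> carr (dual F SF)")
      case True
      then show ?thesis unfolding evl_def scl_dual using lcs_linear_scl[OF dual_lcs_linear[OF True] y] by simp
    qed (simp add: evl_def scl_dual)
  qed
qed

lemma sup_seminorm_transp_le:
  assumes A: "A \<in> carr (Lsp E F SE)" and M: "M \<in> SF'" and b: "0 \<le> b"
    and bound: "\<And>x. x \<in> N \<Longrightarrow> sup_seminorm M norm (evl F SF (A x)) \<le> b"
  shows "sup_seminorm M (sup_seminorm N norm) (transp F SF A) \<le> b"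
proof (rule sup_seminorm_least[OF b])
  fix l assume lM: "l \<in> M"
  then have l: "l \<in> carr (dual F SF)" using covF' M unfolding bsf_covering_def bnd_def by blast
  show "sup_seminorm N norm (transp F SF A l) \<le> b"
  proof (rule sup_seminorm_least[OF b])
    fix x assume x: "x \<in> N"
    have "evl F SF (A x) \<in> carr (Lsp (dual F SF) Kfield SF')"
      using lcs_linear_in[OF lcs_linear_evl Lsp_apply_in[OF F A]] unfolding dual_def[of "dual F SF" SF'] .
    then have "bdd_sup M norm (evl F SF (A x))"
      by (rule Lsp_bdd_sup[OF lcs_dual[OF F covF] lcs_Kfield covF' _ M]) simp
    then have "norm (evl F SF (A x) l) \<le> sup_seminorm M norm (evl F SF (A x))"
      by (rule sup_seminorm_upper[OF _ lM])
    moreover have "evl F SF (A x) l = transp F SF A l x" using l unfolding evl_def transp_def by simp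
    ultimately show "norm (transp F SF A l x) \<le> b" using bound[OF x] by simp
  qed
qed

lemma continuous_map_transp:
  assumes compEF: "bsf_compat E SE F SF"
  shows "continuous_map (lcs_top (Lsp E F SE)) (lcs_top (Lsp (dual F SF) (dual E SE) SF')) (transp F SF)"
proof (rule seminorm_continuous_imp_continuous_map[OF lcs_Lsp[OF E F covE]
      lcs_Lsp[OF lcs_dual[OF F covF] lcs_dual[OF E covE] covF'] lcs_linear_transp[OF compEF]])
  have DDF: "lcs (dual (dual F SF) SF')" using lcs_dual[OF lcs_dual[OF F covF] covF'] .
  have C0: "seminorm_continuous F (dual (dual F SF) SF') (evl F SF)"
    by (rule continuous_map_imp_seminorm_continuous[OF F DDF lcs_linear_evl eta])
  show "seminorm_continuous (Lsp E F SE) (Lsp (dual F SF) (dual E SE) SF') (transp F SF)"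
    unfolding seminorm_continuous_def
  proof (intro ballI allI impI)
    fix Q r assume Q: "Q \<in> sn (Lsp (dual F SF) (dual E SE) SF')" and r: "(0::real) < r"
    obtain M q where M: "M \<in> SF'" and q: "q \<in> sn (dual E SE)" and QM: "Q = sup_seminorm M q"
      using Q unfolding sn_Lsp by blast
    obtain N where N: "N \<in> SE" and qN: "q = sup_seminorm N norm"
      using q unfolding sn_dual by blast
    have r2: "0 < r / 2" using r by simp
    have qM: "sup_seminorm M norm \<in> sn (dual (dual F SF) SF')" unfolding sn_dual using M by blast
    obtain P \<delta> where P: "finite P" "P \<subseteq> sn F" "0 < \<delta>"
      and est: "\<forall>y\<in>carr F. (\<forall>p\<in>P. p y < \<delta>) \<longrightarrow> sup_seminorm M norm (evl F SF y) < r / 2"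
      using seminorm_continuousD[OF C0 qM r2] by blast
    have "Q (transp F SF A) < r"
      if A: "A \<in> carr (Lsp E F SE)" and small: "\<forall>p\<in>sup_seminorm N ` P. p A < \<delta>" for A
    proof -
      have "sup_seminorm M norm (evl F SF (A x)) \<le> r / 2" if x: "x \<in> N" for x
      proof -
        have "p (A x) < \<delta>" if p: "p \<in> P" for p
        proof -
          have "p (A x) \<le> sup_seminorm N p A"
            using sup_seminorm_upper[OF Lsp_bdd_sup[OF E F covE A N] x] p P by auto
          also have "\<dots> < \<delta>" using small p by auto
          finally show ?thesis .
        qed
        then show ?thesis using est Lsp_apply_in[OF F A] by (simp add: less_imp_le)
      qed
      then have "Q (transp F SF A) \<le> r / 2"
        unfolding QM qN by (rule sup_seminorm_transp_le[OF A M less_imp_le[OF r2]])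
      then show ?thesis using r by simp
    qed
    moreover have "finite (sup_seminorm N ` P)" "sup_seminorm N ` P \<subseteq> sn (Lsp E F SE)"
      using P N unfolding sn_Lsp by auto
    ultimately show "\<exists>P \<delta>. finite P \<and> P \<subseteq> sn (Lsp E F SE) \<and> 0 < \<delta> \<and>
        (\<forall>A\<in>carr (Lsp E F SE). (\<forall>p\<in>P. p A < \<delta>) \<longrightarrow> Q (transp F SF A) < r)"
      using P(3) by blast
  qed
qed

end

end

theorem proposition3p2:
  fixes E :: "('e::ab_group_add, 'k::real_normed_field) lcs"
    and F :: "('f::ab_group_add, 'k) lcs"
    and X :: "('x::ab_group_add, 'k) lcs"
    and SE :: "'e set set" and SF :: "'f set set" and SF' :: "('f \<Rightarrow> 'k) set set"
    and n :: enat and U :: "'x set" and f :: "'x \<Rightarrow> 'e \<Rightarrow> 'f"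
  assumes lcsE: "lcs E" and lcsF: "lcs F" and lcsX: "lcs X"
    and covE: "bsf_covering E SE" and covF: "bsf_covering F SF"
    and covF': "bsf_covering (dual F SF) SF'"
    and funct: "bsf_compat E SE E SE" "bsf_compat E SE F SF" "bsf_compat E SE (dual F SF) SF'"
               "bsf_compat F SF E SE" "bsf_compat F SF F SF" "bsf_compat F SF (dual F SF) SF'"
               "bsf_compat (dual F SF) SF' E SE" "bsf_compat (dual F SF) SF' F SF"
               "bsf_compat (dual F SF) SF' (dual F SF) SF'"
    and eta: "continuous_map (lcs_top F) (lcs_top (dual (dual F SF) SF')) (evl F SF)"
    and U: "openin (lcs_top X) U"
    and f: "Cn X (Lsp E F SE) U f n"
  shows "Cn X (Lsp (dual F SF) (dual E SE) SF') U (\<lambda>z. transp F SF (f z)) n"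
proof (rule Cn_compose_linear[OF lcsX _ _ U _ _ f])
  show "lcs (Lsp E F SE)" by (rule lcs_Lsp[OF lcsE lcsF covE])
  show "lcs (Lsp (dual F SF) (dual E SE) SF')"
    by (rule lcs_Lsp[OF lcs_dual[OF lcsF covF] lcs_dual[OF lcsE covE] covF'])
  show "lcs_linear (Lsp E F SE) (Lsp (dual F SF) (dual E SE) SF') (transp F SF)"
    by (rule lcs_linear_transp[OF lcsE lcsF covE covF covF' funct(2)])
  show "continuous_map (lcs_top (Lsp E F SE)) (lcs_top (Lsp (dual F SF) (dual E SE) SF')) (transp F SF)"
    by (rule continuous_map_transp[OF lcsE lcsF covE covF covF' eta funct(2)])
qed

end
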